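(* Consider the following model. Constants $\alpha,\beta\in[0,1]$ satisfy $0<\alpha+\beta\le 1$ and $\alpha\ge\beta$. An agent has innate opinion $x_0\in[-1,1]$, and at every time $k=0,1,2,\dots$ the platform recommends the same content $u_k=u_0\in[-1,1]$. The agent chooses $\mathrm{clk}_k\in\{0,1\}$, and its opinion evolves by $$x_{k}=\begin{cases}\alpha x_0+\beta x_{k-1}+(1-\alpha-\beta)u_{k-1}, & \mathrm{clk}_{k-1}=1,\\ \frac{\alpha}{\alpha+\beta}x_0+\frac{\beta}{\alpha+\beta}x_{k-1}, & \mathrm{clk}_{k-1}=0.\end{cases}$$ Time is divided into consecutive blocks of length $s\in\mathbb{N}$, block $j\ge 0$ consisting of times $js,\dots,js+s-1$; in block $j$ the agent clicks ($\mathrm{clk}_k=1$) at times $js,\dots,js+T_j-1$ and does not click at times $js+T_j,\dots,js+s-1$, where $T_j\in\{0,1,\dots,s\}$. Let $x_i^{(p)}:=x_{is}$ denote the opinion at the beginning of block $i$ under policy $p$. Write $Z=\alpha+\beta$, $B=\frac{\beta}{\alpha+\beta}$, $\eta=\frac{\alpha}{1-\beta}$ (with the convention $0^0=1$). Let $T_0\in\mathbb{N}$, $T_0\le s$. Then for every $i\ge 1$, $$x_i^{(p)}=(1-\Upsilon_i^{(p)})x_0+\Upsilon_i^{(p)}u_0,$$ where the weights $\Upsilon_i^{(p)}$ are as follows. (1) Fixed policy ($p=1$): $T_j=T_0$ for all $j$. Then $$\Upsilon_i^{(1)}=\frac{1-(B^sZ^{T_0})^i}{1-B^sZ^{T_0}}\,(1-\eta)\,B^{s-T_0}\,(1-\beta^{T_0}).$$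 (2) Decreasing policy ($p=2$): let $\kappa>1$ and $m_D\ge 1$ be an integer such that $T_j=T_0/\kappa^j$ is a positive integer for $0\le j\le m_D-1$ and $T_j=0$ for $j\ge m_D$. Then for $1\le i\le m_D$, $$\Upsilon_i^{(2)}=(1-\eta)\,Z^{-\frac{T_0\kappa^{1-i}}{\kappa-1}}\sum_{j=0}^{i-1}B^{(j+1)s-\frac{T_0}{\kappa^{i-j-1}}}\,Z^{\frac{T_0\kappa^{1-i+j}}{\kappa-1}}\bigl(1-\beta^{\frac{T_0}{\kappa^{i-j-1}}}\bigr),$$ and for $i>m_D$, $\Upsilon_i^{(2)}=B^{(i-m_D)s}\,\Upsilon_{m_D}^{(2)}$. (3) Adaptive decreasing policy ($p=3$): let $\tau\ge 1$ be an integer and $m_{AD}\ge 1$ an integer with $T_0-(m_{AD}-1)\tau\ge 0$, such that $T_j=T_0-j\tau$ for $0\le j\le m_{AD}-1$ and $T_j=T_0-(m_{AD}-1)\tau$ for all $j\ge m_{AD}-1$. Then for $1\le i\le m_{AD}$, $$\Upsilon_i^{(3)}=(1-\eta)\sum_{j=0}^{i-1}B^{(j+1)s-T_0+(i-1-j)\tau}\,Z^{j(T_0-\tau i)+\tau\frac{j^2+j}{2}}\bigl(1-\beta^{T_0-(i-1-j)\tau}\bigr),$$ and for $i>m_{AD}$, writing $T'=T_0-(m_{AD}-1)\tau$, $$\Upsilon_i^{(3)}=\frac{1-(B^sZ^{T'})^{i-m_{AD}}}{1-B^sZ^{T'}}(1-\eta)B^{s-T'}(1-\beta^{T'})+(B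^sZ^{T'})^{i-m_{AD}}\,\Upsilon_{m_{AD}}^{(3)}.$$
   Context: This is a model of the feedback loop between a recommendation platform and an agent who decides at each step whether to consume (click on) the recommended content. The three policies are: fixed (click the first $T_0$ steps of every block), decreasing (the clicking length shrinks by a factor $\kappa$ from block to block until it becomes $0$), and adaptive decreasing (the clicking length is reduced by $\tau$ after a block whenever the opinion at the end of that block satisfies $|x-x_0|\ge x_{\text{drift}}$, and otherwise kept; the hypothesis on $T_j$ in part (3) describes a realization in which reductions happen after blocks $0,\dots,m_{AD}-2$ and never afterwards). Blocks $i\le m_D$ (resp. $i\le m_{AD}$) are called transient and later blocks steady-state. *)

theory Defs
  imports Complex_Main
begin

fun opinion :: "real \<Rightarrow> real \<Rightarrow> real \<Rightarrow> real \<Rightarrow> (nat \<Rightarrow> bool) \<Rightarrow> nat \<Rightarrow> real" where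
  "opinion a b x0 u0 clk 0 = x0"
| "opinion a b x0 u0 clk (Suc k) =
     (if clk k then a * x0 + b * opinion a b x0 u0 clk k + (1 - a - b) * u0
      else a / (a + b) * x0 + b / (a + b) * opinion a b x0 u0 clk k)"

definition block_clk :: "nat \<Rightarrow> (nat \<Rightarrow> nat) \<Rightarrow> nat \<Rightarrow> bool" where
  "block_clk s T k = (k mod s < T (k div s))"

definition pow0 :: "real \<Rightarrow> real \<Rightarrow> real" where
  "pow0 x y = (if y = 0 then 1 else x powr y)"

end

theory Submission
  imports Defs
begin

text \<open>
  Write the opinion as \<open>x\<^sub>k = (1 - w\<^sub>k) x0 + w\<^sub>k u0\<close>. A click maps the weight \<open>w\<close> to
  \<open>\<beta> w + (1 - \<alpha> - \<beta>)\<close>, an affine contraction with fixed point \<open>1 - \<eta>\<close>; skipping maps it to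
  \<open>B w\<close>. Since \<open>\<beta> = B Z\<close>, a block with \<open>T\<close> clicks followed by \<open>s - T\<close> skips maps \<open>w\<close> to
  \<open>B\<^sup>s Z\<^sup>T w + (1 - \<eta>) B\<^bsup>s-T\<^esup> (1 - \<beta>\<^sup>T)\<close>. Unrolling this affine recurrence from \<open>w\<^sub>0 = 0\<close>
  gives a sum in which the exponent of \<open>Z\<close> is a partial sum of the \<open>T\<^sub>j\<close>: a geometric series
  for the decreasing policy, an arithmetic one for the adaptive policy. Once \<open>T\<^sub>j\<close> is constant
  the recurrence has constant coefficients and is summed as a geometric series.
\<close>

fun content_weight :: "real \<Rightarrow> real \<Rightarrow> (nat \<Rightarrow> bool) \<Rightarrow> nat \<Rightarrow> real" where
  "content_weight a b clk 0 = 0"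
| "content_weight a b clk (Suc k) =
     (if clk k then b * content_weight a b clk k + (1 - a - b)
      else b / (a + b) * content_weight a b clk k)"

lemma opinion_eq_content_weight:
  assumes "a + b \<noteq> 0"
  shows "opinion a b x0 u0 clk k = (1 - content_weight a b clk k) * x0 + content_weight a b clk k * u0"
proof (induction k)
  case (Suc k)
  have idle_share: "a / (a + b) * x0 = x0 - b / (a + b) * x0"
    using assms by (simp add: field_simps)
  show ?case
    unfolding opinion.simps content_weight.simps Suc idle_share
    by (simp add: algebra_simps)
qed simp

lemma block_clk_within_block:
  assumes "t < s"
  shows "block_clk s T (i * s + t) \<longleftrightarrow> t < T i"
  using assms by (simp add: block_clk_def)

lemma content_weight_click_run:
  assumes "b \<noteq> 1" "t \<le> T i" "T i \<le> s"
  shows "content_weight a b (block_clk s T) (i * s + t)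
       = b ^ t * content_weight a b (block_clk s T) (i * s) + (1 - a / (1 - b)) * (1 - b ^ t)"
  using assms(2)
proof (induction t)
  case (Suc t)
  then have "block_clk s T (i * s + t)"
    using assms(3) by (simp add: block_clk_within_block)
  then have "content_weight a b (block_clk s T) (i * s + Suc t)
      = b * content_weight a b (block_clk s T) (i * s + t) + (1 - a - b)"
    by simp
  also have "content_weight a b (block_clk s T) (i * s + t)
      = b ^ t * content_weight a b (block_clk s T) (i * s) + (1 - a / (1 - b)) * (1 - b ^ t)"
    using Suc by simp
  finally show ?case
    using assms(1) by (simp add: field_simps)
qed simp

lemma content_weight_idle_run:
  assumes "T i + d \<le> s"
  shows "content_weight a b (block_clk s T) (i * s + T i + d)
       = (b / (a + b)) ^ d * content_weight a b (block_clk s T) (i * s + T i)"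
  using assms
proof (induction d)
  case (Suc d)
  then have "\<not> block_clk s T (i * s + (T i + d))"
    by (simp add: block_clk_within_block)
  with Suc show ?case
    by (simp add: add.assoc)
qed simp

lemma affine_recurrence_closed_form:
  fixes Y a c :: "nat \<Rightarrow> 'a::comm_semiring_1"
  assumes "Y 0 = 0" and "\<And>k. k < n \<Longrightarrow> Y (Suc k) = a k * Y k + c k"
  shows "Y n = (\<Sum>k<n. c k * (\<Prod>l\<in>{Suc k..<n}. a l))"
  using assms(2)
proof (induction n)
  case (Suc n)
  have "(\<Sum>k<n. c k * (\<Prod>l\<in>{Suc k..<Suc n}. a l)) = a n * (\<Sum>k<n. c k * (\<Prod>l\<in>{Suc k..<n}. a l))"
    by (simp add: sum_distrib_left algebra_simps)
  with Suc show ?case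
    by simp
qed (simp add: assms(1))

lemma affine_recurrence_constant_coeffs:
  fixes Y :: "nat \<Rightarrow> 'a::field"
  assumes "\<And>k. m \<le> k \<Longrightarrow> Y (Suc k) = r * Y k + c" and "r \<noteq> 1"
  shows "Y (m + n) = (1 - r ^ n) / (1 - r) * c + r ^ n * Y m"
proof (induction n)
  case (Suc n)
  have "Y (m + Suc n) = r * Y (m + n) + c"
    using assms(1) by simp
  then show ?case
    unfolding Suc using assms(2) by (simp add: field_simps)
qed simp

lemma pow0_of_nat:
  assumes "0 \<le> x"
  shows "pow0 x (real n) = x ^ n"
  using assms by (cases "x = 0") (auto simp: pow0_def powr_realpow)

lemma telescoping_powr_sum:
  fixes \<kappa> :: real
  assumes "0 < \<kappa>" and "m \<le> n"
  shows "(\<kappa> - 1) * (\<Sum>l\<in>{m..<n}. \<kappa> powr - real l) = \<kappa> powr (1 - real m) - \<kappa> powr (1 - real n)"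
proof -
  define f where "f l = - (\<kappa> powr (1 - real l))" for l
  have "(\<kappa> - 1) * \<kappa> powr - real l = f (Suc l) - f l" for l
    using assms(1) by (simp add: f_def algebra_simps powr_diff powr_minus divide_inverse)
  then show ?thesis
    using sum_Suc_diff'[OF assms(2), of f] by (simp add: sum_distrib_left f_def)
qed

lemma double_sum_real_atLeastLessThan:
  "2 * (\<Sum>l\<in>{m..<m + j}. real l) = real j * (2 * real m + real j - 1)"
  by (induction j) (auto simp: algebra_simps)

definition block_weight :: "real \<Rightarrow> real \<Rightarrow> nat \<Rightarrow> (nat \<Rightarrow> nat) \<Rightarrow> nat \<Rightarrow> real" where
  "block_weight a b s T i = content_weight a b (block_clk s T) (i * s)"

locale opinion_model =
  fixes \<alpha> \<beta> B Z \<eta> :: real and s :: nat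
  assumes \<beta>_nonneg: "0 \<le> \<beta>" and \<beta>_le_\<alpha>: "\<beta> \<le> \<alpha>"
    and sum_pos: "0 < \<alpha> + \<beta>" and sum_le_1: "\<alpha> + \<beta> \<le> 1" and s_pos: "0 < s"
    and Z_def: "Z = \<alpha> + \<beta>" and B_def: "B = \<beta> / (\<alpha> + \<beta>)" and \<eta>_def: "\<eta> = \<alpha> / (1 - \<beta>)"
begin

lemma \<beta>_lt_1: "\<beta> < 1"
  using \<beta>_le_\<alpha> sum_le_1 sum_pos by linarith

lemma Z_pos: "0 < Z"
  using sum_pos by (simp add: Z_def)

lemma B_nonneg: "0 \<le> B"
  using \<beta>_nonneg sum_pos by (simp add: B_def)

lemma block_rate_lt_1: "B ^ s * Z ^ n < 1"
proof -
  have "B < 1"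
    using \<beta>_le_\<alpha> \<beta>_nonneg sum_pos by (simp add: B_def divide_less_eq)
  then have "B ^ s < 1"
    using B_nonneg s_pos by (simp add: power_less_one_iff)
  moreover have "Z ^ n \<le> 1"
    using Z_pos sum_le_1 by (simp add: Z_def power_le_one)
  ultimately show ?thesis
    using B_nonneg by (meson le_less_trans mult_left_le zero_le_power)
qed

lemma block_weight_0 [simp]: "block_weight \<alpha> \<beta> s T 0 = 0"
  by (simp add: block_weight_def)

lemma block_weight_Suc:
  assumes "T i \<le> s"
  shows "block_weight \<alpha> \<beta> s T (Suc i)
       = B ^ s * Z ^ T i * block_weight \<alpha> \<beta> s T i + (1 - \<eta>) * B ^ (s - T i) * (1 - \<beta> ^ T i)"
proof -
  have rate: "B ^ (s - T i) * \<beta> ^ T i = B ^ s * Z ^ T i"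
  proof -
    have "\<beta> = B * Z"
      using sum_pos by (simp add: B_def Z_def)
    then show ?thesis
      using assms by (simp add: power_mult_distrib mult.assoc flip: power_add)
  qed
  have block_end: "Suc i * s = i * s + T i + (s - T i)"
    using assms by simp
  have "block_weight \<alpha> \<beta> s T (Suc i) = B ^ (s - T i) * content_weight \<alpha> \<beta> (block_clk s T) (i * s + T i)"
    unfolding block_weight_def block_end B_def by (rule content_weight_idle_run) (use assms in simp)
  also have "\<dots> = B ^ (s - T i) * (\<beta> ^ T i * block_weight \<alpha> \<beta> s T i + (1 - \<eta>) * (1 - \<beta> ^ T i))"
    using content_weight_click_run[of \<beta> "T i" T i s \<alpha>] assms \<beta>_lt_1
    by (simp add: block_weight_def \<eta>_def)
  also have "\<dots> = B ^ s * Z ^ T i * block_weight \<alpha> \<beta> s T i + (1 - \<eta>) * B ^ (s - T i) * (1 - \<beta> ^ T i)"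
    unfolding distrib_left mult.assoc[symmetric] rate by (simp add: ac_simps)
  finally show ?thesis .
qed

lemma block_weight_as_sum:
  assumes "\<forall>l<i. T l \<le> s"
  shows "block_weight \<alpha> \<beta> s T i = (\<Sum>j<i. (1 - \<eta>) * B ^ (s - T (i - 1 - j)) * (1 - \<beta> ^ T (i - 1 - j))
                                     * (B ^ s) ^ j * Z ^ (\<Sum>l\<in>{i - j..<i}. T l))"
proof -
  define g where "g k = (1 - \<eta>) * B ^ (s - T k) * (1 - \<beta> ^ T k)
                        * ((B ^ s) ^ (i - Suc k) * Z ^ (\<Sum>l\<in>{Suc k..<i}. T l))" for k
  have "block_weight \<alpha> \<beta> s T i
      = (\<Sum>k<i. (1 - \<eta>) * B ^ (s - T k) * (1 - \<beta> ^ T k) * (\<Prod>l\<in>{Suc k..<i}. B ^ s * Z ^ T l))"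
    by (rule affine_recurrence_closed_form) (simp_all add: block_weight_Suc assms)
  also have "\<dots> = sum g {..<i}"
    by (simp add: g_def prod.distrib power_sum)
  also have "\<dots> = (\<Sum>j<i. g (i - Suc j))"
    by (rule sum.nat_diff_reindex[symmetric])
  also have "\<dots> = (\<Sum>j<i. (1 - \<eta>) * B ^ (s - T (i - 1 - j)) * (1 - \<beta> ^ T (i - 1 - j))
                                     * (B ^ s) ^ j * Z ^ (\<Sum>l\<in>{i - j..<i}. T l))"
    by (rule sum.cong) (auto simp: g_def Suc_diff_Suc)
  finally show ?thesis .
qed

lemma block_weight_as_real_power_sum:
  assumes "\<forall>l<i. T l \<le> s"
  shows "block_weight \<alpha> \<beta> s T i = (1 - \<eta>) *
           (\<Sum>j<i. pow0 B (real ((j + 1) * s) - real (T (i - 1 - j)))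
                  * Z powr (\<Sum>l\<in>{i - j..<i}. real (T l))
                  * (1 - pow0 \<beta> (real (T (i - 1 - j)))))"
  unfolding block_weight_as_sum[OF assms] sum_distrib_left
proof (rule sum.cong)
  fix j assume "j \<in> {..<i}"
  then have T_le: "T (i - 1 - j) \<le> s"
    using assms by simp
  then have exponent: "real ((j + 1) * s) - real (T (i - 1 - j)) = real (s - T (i - 1 - j) + s * j)"
    by (simp add: of_nat_diff algebra_simps)
  have "pow0 B (real ((j + 1) * s) - real (T (i - 1 - j))) = B ^ (s - T (i - 1 - j)) * (B ^ s) ^ j"
    unfolding exponent pow0_of_nat[OF B_nonneg] by (simp add: power_add power_mult)
  moreover have "Z powr (\<Sum>l\<in>{i - j..<i}. real (T l)) = Z ^ (\<Sum>l\<in>{i - j..<i}. T l)"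
    using Z_pos by (simp add: powr_realpow flip: of_nat_sum)
  ultimately show "(1 - \<eta>) * B ^ (s - T (i - 1 - j)) * (1 - \<beta> ^ T (i - 1 - j)) * (B ^ s) ^ j
                     * Z ^ (\<Sum>l\<in>{i - j..<i}. T l)
                 = (1 - \<eta>) * (pow0 B (real ((j + 1) * s) - real (T (i - 1 - j)))
                     * Z powr (\<Sum>l\<in>{i - j..<i}. real (T l)) * (1 - pow0 \<beta> (real (T (i - 1 - j)))))"
    using \<beta>_nonneg by (simp add: pow0_of_nat)
qed simp

lemma block_weight_eventually_constant:
  assumes "\<And>l. m \<le> l \<Longrightarrow> T l = T'" and "T' \<le> s"
  shows "block_weight \<alpha> \<beta> s T (m + n)
       = (1 - (B ^ s * Z ^ T') ^ n) / (1 - B ^ s * Z ^ T') * (1 - \<eta>) * B ^ (s - T') * (1 - \<beta> ^ T')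
         + (B ^ s * Z ^ T') ^ n * block_weight \<alpha> \<beta> s T m"
proof -
  have "block_weight \<alpha> \<beta> s T (m + n)
      = (1 - (B ^ s * Z ^ T') ^ n) / (1 - B ^ s * Z ^ T') * ((1 - \<eta>) * B ^ (s - T') * (1 - \<beta> ^ T'))
         + (B ^ s * Z ^ T') ^ n * block_weight \<alpha> \<beta> s T m"
    using block_rate_lt_1[of T'] assms
    by (intro affine_recurrence_constant_coeffs) (simp_all add: block_weight_Suc)
  then show ?thesis
    by (simp add: mult.assoc)
qed

lemma fixed_policy_weight:
  assumes "\<And>j. T j = T0" and "T0 \<le> s"
  shows "block_weight \<alpha> \<beta> s T i
       = (1 - (B ^ s * Z ^ T0) ^ i) / (1 - B ^ s * Z ^ T0) * (1 - \<eta>) * B ^ (s - T0) * (1 - \<beta> ^ T0)"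
  using block_weight_eventually_constant[of 0 T T0 i] assms by simp

lemma block_weight_after_clicking_stops:
  assumes "\<And>l. m \<le> l \<Longrightarrow> T l = 0" and "m \<le> i"
  shows "block_weight \<alpha> \<beta> s T i = B ^ ((i - m) * s) * block_weight \<alpha> \<beta> s T m"
  using block_weight_eventually_constant[of m T 0 "i - m"] assms
  by (simp add: power_mult mult.commute[of _ s])

lemma decreasing_policy_weight:
  assumes "1 < \<kappa>" and "\<And>j. j < i \<Longrightarrow> real (T j) = real T0 / \<kappa> ^ j" and "T0 \<le> s"
  shows "block_weight \<alpha> \<beta> s T i = (1 - \<eta>) * Z powr (- (real T0 * \<kappa> powr (1 - real i)) / (\<kappa> - 1)) *
           (\<Sum>j<i. pow0 B (real ((j + 1) * s) - real T0 / \<kappa> ^ (i - j - 1))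
                  * Z powr (real T0 * \<kappa> powr (1 - real i + real j) / (\<kappa> - 1))
                  * (1 - pow0 \<beta> (real T0 / \<kappa> ^ (i - j - 1))))"
proof -
  have T_powr: "real (T l) = real T0 * \<kappa> powr - real l" if "l < i" for l
    using assms(1,2) that by (simp add: powr_minus powr_realpow divide_inverse)
  have T_le: "\<forall>l<i. T l \<le> s"
  proof (intro allI impI)
    fix l assume "l < i"
    have "real T0 / \<kappa> ^ l \<le> real T0"
      using assms(1) by (simp add: divide_le_eq mult_le_cancel_left1 one_le_power)
    then show "T l \<le> s"
      using assms(2,3) \<open>l < i\<close> by (metis of_nat_le_iff order_trans)
  qed
  have clicks: "Z powr (\<Sum>l\<in>{i - j..<i}. real (T l))
      = Z powr (- (real T0 * \<kappa> powr (1 - real i)) / (\<kappa> - 1))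
        * Z powr (real T0 * \<kappa> powr (1 - real i + real j) / (\<kappa> - 1))"
    if "j < i" for j
  proof -
    have "(\<kappa> - 1) * (\<Sum>l\<in>{i - j..<i}. real (T l)) = real T0 * ((\<kappa> - 1) * (\<Sum>l\<in>{i - j..<i}. \<kappa> powr - real l))"
      by (simp add: T_powr sum_distrib_left algebra_simps)
    also have "\<dots> = real T0 * (\<kappa> powr (1 - real i + real j) - \<kappa> powr (1 - real i))"
    proof -
      have "1 - real (i - j) = 1 - real i + real j"
        using that by (simp add: of_nat_diff)
      then show ?thesis
        using telescoping_powr_sum[of \<kappa> "i - j" i] assms(1) by (simp only:)
    qed
    finally have "(\<Sum>l\<in>{i - j..<i}. real (T l))
        = real T0 * (\<kappa> powr (1 - real i + real j) - \<kappa> powr (1 - real i)) / (\<kappa> - 1)"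
      using assms(1) by (simp add: eq_divide_eq mult.commute)
    then show ?thesis
      unfolding powr_add[symmetric] by (simp add: right_diff_distrib diff_divide_distrib)
  qed
  have last_block: "real (T (i - Suc j)) = real T0 / \<kappa> ^ (i - Suc j)" if "j < i" for j
    using assms(2) that by simp
  show ?thesis
    unfolding block_weight_as_real_power_sum[OF T_le] sum_distrib_left
    by (rule sum.cong) (simp_all add: last_block clicks algebra_simps)
qed

lemma adaptive_policy_weight:
  assumes "\<And>j. j < i \<Longrightarrow> T j = T0 - j * \<tau>" and "(i - 1) * \<tau> \<le> T0" and "T0 \<le> s"
  shows "block_weight \<alpha> \<beta> s T i = (1 - \<eta>) *
           (\<Sum>j<i. pow0 B (real ((j + 1) * s) - real T0 + real ((i - 1 - j) * \<tau>))
                  * Z powr (real j * (real T0 - real \<tau> * real i) + real \<tau> * (real j ^ 2 + real j) / 2)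
                  * (1 - pow0 \<beta> (real T0 - real ((i - 1 - j) * \<tau>))))"
proof -
  have T_real: "real (T l) = real T0 - real (l * \<tau>)" if "l < i" for l
  proof -
    have "l * \<tau> \<le> (i - 1) * \<tau>"
      using that by (intro mult_le_mono1) simp
    then have "l * \<tau> \<le> T0"
      using assms(2) by linarith
    then show ?thesis
      using assms(1) that by (simp add: of_nat_diff)
  qed
  have T_le: "\<forall>l<i. T l \<le> s"
    using assms(1,3) by (simp add: le_trans[OF diff_le_self])
  have clicks: "(\<Sum>l\<in>{i - j..<i}. real (T l))
      = real j * (real T0 - real \<tau> * real i) + real \<tau> * (real j ^ 2 + real j) / 2"
    if "j < i" for j
  proof -
    have "(\<Sum>l\<in>{i - j..<i}. real (T l)) = (\<Sum>l\<in>{i - j..<i}. real T0 - real \<tau> * real l)"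
      by (rule sum.cong) (simp_all add: T_real)
    also have "\<dots> = real j * real T0 - real \<tau> * (\<Sum>l\<in>{i - j..<i}. real l)"
      using that by (simp add: sum_subtractf sum_distrib_left)
    also have "(\<Sum>l\<in>{i - j..<i}. real l) = real j * (2 * real i - real j - 1) / 2"
      using double_sum_real_atLeastLessThan[of "i - j" j] that by (simp add: of_nat_diff algebra_simps)
    finally show ?thesis
      by (simp add: power2_eq_square field_simps)
  qed
  have last_block: "real (T (i - 1 - j)) = real T0 - real ((i - 1 - j) * \<tau>)" if "j < i" for j
    using T_real that by simp
  show ?thesis
    unfolding block_weight_as_real_power_sum[OF T_le]
    by (rule arg_cong[where f = "(*) (1 - \<eta>)"], rule sum.cong)
      (simp_all only: lessThan_iff last_block clicks diff_diff_eq2 diff_add_eq)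
qed

end

theorem proposition1:
  fixes \<alpha> \<beta> x0 u0 :: real and s T0 :: nat
  assumes "0 \<le> \<alpha>" "\<alpha> \<le> 1" "0 \<le> \<beta>" "\<beta> \<le> 1"
    and "0 < \<alpha> + \<beta>" "\<alpha> + \<beta> \<le> 1" "\<beta> \<le> \<alpha>"
    and "-1 \<le> x0" "x0 \<le> 1" "-1 \<le> u0" "u0 \<le> 1"
    and "0 < s" "T0 \<le> s"
  defines "Z \<equiv> \<alpha> + \<beta>" and "B \<equiv> \<beta> / (\<alpha> + \<beta>)" and "\<eta> \<equiv> \<alpha> / (1 - \<beta>)"
  shows
    "(\<forall>T. (\<forall>j. T j = T0) \<longrightarrow>
        (\<forall>i\<ge>1. let \<Upsilon> = (1 - (B^s * Z^T0)^i) / (1 - B^s * Z^T0) * (1 - \<eta>) * B^(s - T0) * (1 - \<beta>^T0)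
               in opinion \<alpha> \<beta> x0 u0 (block_clk s T) (i * s) = (1 - \<Upsilon>) * x0 + \<Upsilon> * u0))
   \<and> (\<forall>T (\<kappa>::real) mD. 1 < \<kappa> \<and> 1 \<le> mD
        \<and> (\<forall>j<mD. 0 < T j \<and> real (T j) = real T0 / \<kappa>^j) \<and> (\<forall>j\<ge>mD. T j = 0) \<longrightarrow>
        (let \<Upsilon> = (\<lambda>i::nat. (1 - \<eta>) * Z powr (- (real T0 * \<kappa> powr (1 - real i)) / (\<kappa> - 1)) *
              (\<Sum>j<i. pow0 B (real ((j + 1) * s) - real T0 / \<kappa>^(i - j - 1))
                     * Z powr (real T0 * \<kappa> powr (1 - real i + real j) / (\<kappa> - 1))
                     * (1 - pow0 \<beta> (real T0 / \<kappa>^(i - j - 1)))))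
         in (\<forall>i. 1 \<le> i \<and> i \<le> mD \<longrightarrow>
               opinion \<alpha> \<beta> x0 u0 (block_clk s T) (i * s) = (1 - \<Upsilon> i) * x0 + \<Upsilon> i * u0)
          \<and> (\<forall>i>mD. let \<Upsilon>' = B^((i - mD) * s) * \<Upsilon> mD in
               opinion \<alpha> \<beta> x0 u0 (block_clk s T) (i * s) = (1 - \<Upsilon>') * x0 + \<Upsilon>' * u0)))
   \<and> (\<forall>T (\<tau>::nat) mAD. 1 \<le> \<tau> \<and> 1 \<le> mAD \<and> (mAD - 1) * \<tau> \<le> T0
        \<and> (\<forall>j<mAD. T j = T0 - j * \<tau>) \<and> (\<forall>j\<ge>mAD - 1. T j = T0 - (mAD - 1) * \<tau>) \<longrightarrow>
        (let \<Upsilon> = (\<lambda>i::nat. (1 - \<eta>) *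
              (\<Sum>j<i. pow0 B (real ((j + 1) * s) - real T0 + real ((i - 1 - j) * \<tau>))
                     * Z powr (real j * (real T0 - real \<tau> * real i) + real \<tau> * (real j ^ 2 + real j) / 2)
                     * (1 - pow0 \<beta> (real T0 - real ((i - 1 - j) * \<tau>)))));
             T' = T0 - (mAD - 1) * \<tau>
         in (\<forall>i. 1 \<le> i \<and> i \<le> mAD \<longrightarrow>
               opinion \<alpha> \<beta> x0 u0 (block_clk s T) (i * s) = (1 - \<Upsilon> i) * x0 + \<Upsilon> i * u0)
          \<and> (\<forall>i>mAD. let \<Upsilon>' = (1 - (B^s * Z^T')^(i - mAD)) / (1 - B^s * Z^T') * (1 - \<eta>)
                                * B^(s - T') * (1 - \<beta>^T') + (B^s * Z^T')^(i - mAD) * \<Upsilon> mAD in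
               opinion \<alpha> \<beta> x0 u0 (block_clk s T) (i * s) = (1 - \<Upsilon>') * x0 + \<Upsilon>' * u0)))"
proof -
  interpret opinion_model \<alpha> \<beta> B Z \<eta> s
    using assms(3,5,6,7,12) by unfold_locales (simp_all add: B_def Z_def \<eta>_def)
  have opinion_eq: "opinion \<alpha> \<beta> x0 u0 (block_clk s T) (i * s)
      = (1 - block_weight \<alpha> \<beta> s T i) * x0 + block_weight \<alpha> \<beta> s T i * u0" for T i
    using assms(5) by (simp add: block_weight_def opinion_eq_content_weight)
  show ?thesis
    unfolding Let_def opinion_eq
  proof (intro conjI allI impI, goal_cases)
    case (1 T i)
    then show ?case
      using fixed_policy_weight assms(13) by simp
  next
    case (2 T \<kappa> mD i)
    then show ?case
      using decreasing_policy_weight[of \<kappa> i T T0] assms(13) by simp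
  next
    case (3 T \<kappa> mD i)
    then show ?case
      using block_weight_after_clicking_stops[of mD T i] decreasing_policy_weight[of \<kappa> mD T T0] assms(13)
      by simp
  next
    case (4 T \<tau> mAD i)
    then have "(i - 1) * \<tau> \<le> T0"
      by (meson diff_le_mono le_trans mult_le_mono1)
    with 4 show ?case
      using adaptive_policy_weight[of i T T0 \<tau>] assms(13) by simp
  next
    case (5 T \<tau> mAD i)
    then show ?case
      using block_weight_eventually_constant[of mAD T "T0 - (mAD - 1) * \<tau>" "i - mAD"]
        adaptive_policy_weight[of mAD T T0 \<tau>] assms(13) by simp
  qed
qed

end
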